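(* Let $(E,\vdash)$ be a pure event structure and let $x,y$ be left-closed configurations of it. Then the following are equivalent: (i) $x\subseteq y$ and for every $Z\subseteq y$ there is $W\subseteq x$ with $W\vdash Z$; (ii) $x\subseteq y$ and every set $Z$ with $x\subseteq Z\subseteq y$ is a left-closed configuration of $(E,\vdash)$.
   Context: An event structure is a pair $(E,\vdash)$ with $\vdash\subseteq\mathcal{P}(E)\times\mathcal{P}(E)$; it is pure if $X\vdash Y$ implies $X\cap Y=\emptyset$. A set $X\subseteq E$ is a left-closed configuration iff for every $Y\subseteq X$ there exists $Z\subseteq X$ with $Z\vdash Y$. (Condition (i) is the step transition relation of the event structure; condition (ii) is the step transition relation of the configuration structure formed by its left-closed configurations.) *)

theory Defs
  imports Main
begin

definition event_structure :: "'a set \<Rightarrow> ('a set \<Rightarrow> 'a set \<Rightarrow> bool) \<Rightarrow> bool" where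
  "event_structure E enab \<longleftrightarrow> (\<forall>X Y. enab X Y \<longrightarrow> X \<subseteq> E \<and> Y \<subseteq> E)"

definition pure_es :: "'a set \<Rightarrow> ('a set \<Rightarrow> 'a set \<Rightarrow> bool) \<Rightarrow> bool" where
  "pure_es E enab \<longleftrightarrow> event_structure E enab \<and> (\<forall>X Y. enab X Y \<longrightarrow> X \<inter> Y = {})"

definition left_closed_conf :: "'a set \<Rightarrow> ('a set \<Rightarrow> 'a set \<Rightarrow> bool) \<Rightarrow> 'a set \<Rightarrow> bool" where
  "left_closed_conf E enab X \<longleftrightarrow> X \<subseteq> E \<and> (\<forall>Y\<subseteq>X. \<exists>Z\<subseteq>X. enab Z Y)"

end

theory Submission
  imports Defs
begin

text \<open>If every subset of y is enabled from within x, then so is every subset of an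
  intermediate set Z, and the enabling set lies in x \<subseteq> Z. Conversely, for Z \<subseteq> y the
  configuration x \<union> Z enables Z from some W \<subseteq> x \<union> Z, and purity forces W to avoid Z,
  so W \<subseteq> x.\<close>

lemma left_closed_conf_between:
  assumes "y \<subseteq> E" and "\<forall>Z\<subseteq>y. \<exists>W\<subseteq>x. enab W Z"
    and "x \<subseteq> Z" and "Z \<subseteq> y"
  shows "left_closed_conf E enab Z"
  unfolding left_closed_conf_def
proof (intro conjI allI impI)
  show "Z \<subseteq> E" using assms(1,4) by blast
  fix Y assume "Y \<subseteq> Z"
  then obtain W where "W \<subseteq> x" "enab W Y" using assms(2,4) by (meson order_trans)
  then show "\<exists>W\<subseteq>Z. enab W Y" using assms(3) by blast
qed

lemma pure_es_enabled_from_lower: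
  assumes "pure_es E enab" and "left_closed_conf E enab (x \<union> Z)"
  shows "\<exists>W\<subseteq>x. enab W Z"
proof -
  obtain W where W: "W \<subseteq> x \<union> Z" "enab W Z"
    using assms(2) unfolding left_closed_conf_def by blast
  then have "W \<inter> Z = {}" using assms(1) unfolding pure_es_def by blast
  with W show ?thesis by blast
qed

theorem mainTheorem10:
  fixes E :: "'a set" and enab :: "'a set \<Rightarrow> 'a set \<Rightarrow> bool" and x y :: "'a set"
  assumes "pure_es E enab"
    and "left_closed_conf E enab x"
    and "left_closed_conf E enab y"
  shows "(x \<subseteq> y \<and> (\<forall>Z\<subseteq>y. \<exists>W\<subseteq>x. enab W Z))
     \<longleftrightarrow> (x \<subseteq> y \<and> (\<forall>Z. x \<subseteq> Z \<and> Z \<subseteq> y \<longrightarrow> left_closed_conf E enab Z))"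
proof
  have "y \<subseteq> E" using assms(3) unfolding left_closed_conf_def by blast
  then show "x \<subseteq> y \<and> (\<forall>Z. x \<subseteq> Z \<and> Z \<subseteq> y \<longrightarrow> left_closed_conf E enab Z)"
    if "x \<subseteq> y \<and> (\<forall>Z\<subseteq>y. \<exists>W\<subseteq>x. enab W Z)"
    using that left_closed_conf_between[of y E x enab] by simp
next
  assume between: "x \<subseteq> y \<and> (\<forall>Z. x \<subseteq> Z \<and> Z \<subseteq> y \<longrightarrow> left_closed_conf E enab Z)"
  have "\<exists>W\<subseteq>x. enab W Z" if "Z \<subseteq> y" for Z
  proof -
    have "left_closed_conf E enab (x \<union> Z)" using between that by simp
    then show ?thesis by (rule pure_es_enabled_from_lower[OF assms(1)])
  qed
  with between show "x \<subseteq> y \<and> (\<forall>Z\<subseteq>y. \<exists>W\<subseteq>x. enab W Z)" by simp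
qed

end
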